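(* Let $\Omega\subseteq\mathbb{R}^n$ and $\varphi\in\Phi_{\mathrm w}(\Omega)$. The following are equivalent: (1) $\varphi$ satisfies condition (A2). (2) For every $\sigma>0$ there exist $\beta\in(0,1]$ and $h\in L^1(\Omega)\cap L^\infty(\Omega)$, $h\ge0$, such that for a.e. $x,y\in\Omega$: $\varphi(x,\beta t)\le\varphi(y,t)+h(x)+h(y)$ whenever $\varphi(y,t)\in[0,\sigma]$. (3) For every $\sigma>0$ there exist $\beta\in(0,1]$ and $h\in L^1(\Omega)\cap L^\infty(\Omega)$, $h\ge0$, such that for a.e. $x,y\in\Omega$: $\beta\varphi^{-1}(x,\max\{\tau,h(x)+h(y)\})\le\varphi^{-1}(y,\max\{\tau,h(x)+h(y)\})$ for all $\tau\in[0,\sigma]$. (4) For every $\sigma>0$ there exist $\beta\in(0,1]$ and $h\in L^1(\Omega)\cap L^\infty(\Omega)$, $h\ge0$, with $\|h\|_\infty\le\sigma/2$, such that for a.e. $x,y\in\Omega$: $\beta\varphi^{-1}(x,\tau)\le\varphi^{-1}(y,\tau)$ for all $\tau\in[h(x)+h(y),\sigma]$. (5) $\varphi$ satisfies condition (A0), and for every $\sigma>0$ there exist $\beta\in(0,1]$ and $h\in L^1(\Omega)\cap L^\infty(\Omega)$, $h\ge0$, such that for a.e. $x,y\in\Omega$: $\beta\varphi^{-1}(x,\tau)\le\varphi^{-1}(y,\tau)$ for all $\tau\in[h(x)+h(y),\sigma]$.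
   Context: A function $f:[0,\infty)\to[0,\infty]$ is $a$-almost increasing ($a\ge1$) if $f(s)\le a f(t)$ for all $s\le t$. A function $\varphi:\Omega\times[0,\infty)\to[0,\infty]$ is a weak $\Phi$-function, $\varphi\in\Phi_{\mathrm w}(\Omega)$, if for a.e. $x\in\Omega$: $x\mapsto\varphi(x,|f(x)|)$ is measurable for every measurable $f:\Omega\to\mathbb{R}$; $t\mapsto\varphi(x,t)$ is increasing (non-decreasing); $\varphi(x,0)=\lim_{t\to0^+}\varphi(x,t)=0$ and $\lim_{t\to\infty}\varphi(x,t)=\infty$; and $t\mapsto\varphi(x,t)/t$ is $a$-almost increasing on $(0,\infty)$ with $a\ge1$ independent of $x$. The left-inverse is $\varphi^{-1}(x,\tau):=\inf\{t\ge0:\varphi(x,t)\ge\tau\}$. Condition (A0): there exists $\beta\in(0,1]$ with $\beta\le\varphi^{-1}(x,1)\le1/\beta$ for a.e. $x\in\Omega$. Condition (A2): for every $\sigma>0$ there exist $\beta\in(0,1]$ and $h\in L^1(\Omega)\cap L^\infty(\Omega)$, $h\ge0$, such that for a.e. $x,y\in\Omega$, $\beta\varphi^{-1}(x,\tau)\le\varphi^{-1}(y,\tau+h(x)+h(y))$ for all $\tau\in[0,\sigma]$. *)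

theory Defs
  imports "HOL-Analysis.Analysis"
begin

text \<open>Omega is a Lebesgue measurable subset of a Euclidean space; phi :: 'a => real => ennreal
  models a function Omega x [0,oo) -> [0,oo]; only arguments t >= 0 are relevant.\<close>

definition ae_in :: "'a::euclidean_space set \<Rightarrow> ('a \<Rightarrow> bool) \<Rightarrow> bool" where
  "ae_in \<Omega> P \<longleftrightarrow> (\<exists>N \<in> null_sets lebesgue. \<forall>x \<in> \<Omega> - N. P x)"

definition ae2_in :: "'a::euclidean_space set \<Rightarrow> ('a \<Rightarrow> 'a \<Rightarrow> bool) \<Rightarrow> bool" where
  "ae2_in \<Omega> P \<longleftrightarrow> (\<exists>N \<in> null_sets lebesgue. \<forall>x \<in> \<Omega> - N. \<forall>y \<in> \<Omega> - N. P x y)"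

definition almost_increasing_pos :: "real \<Rightarrow> (real \<Rightarrow> ennreal) \<Rightarrow> bool" where
  "almost_increasing_pos a g \<longleftrightarrow> (\<forall>s t. 0 < s \<longrightarrow> s \<le> t \<longrightarrow> g s \<le> ennreal a * g t)"

definition weak_Phi :: "'a::euclidean_space set \<Rightarrow> ('a \<Rightarrow> real \<Rightarrow> ennreal) \<Rightarrow> bool" where
  "weak_Phi \<Omega> \<phi> \<longleftrightarrow>
     (\<forall>f \<in> borel_measurable (lebesgue_on \<Omega>).
        (\<lambda>x. \<phi> x \<bar>f x\<bar>) \<in> borel_measurable (lebesgue_on \<Omega>)) \<and>
     (\<exists>a \<ge> 1. ae_in \<Omega> (\<lambda>x.
        (\<forall>s t. 0 \<le> s \<longrightarrow> s \<le> t \<longrightarrow> \<phi> x s \<le> \<phi> x t) \<and>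
        \<phi> x 0 = 0 \<and> (\<phi> x \<longlongrightarrow> 0) (at_right 0) \<and>
        (\<phi> x \<longlongrightarrow> top) at_top \<and>
        almost_increasing_pos a (\<lambda>t. \<phi> x t / ennreal t)))"

definition phi_inv :: "('a \<Rightarrow> real \<Rightarrow> ennreal) \<Rightarrow> 'a \<Rightarrow> real \<Rightarrow> real" where
  "phi_inv \<phi> x \<tau> = Inf {t. 0 \<le> t \<and> ennreal \<tau> \<le> \<phi> x t}"

definition L1_Linf_nonneg :: "'a::euclidean_space set \<Rightarrow> ('a \<Rightarrow> real) \<Rightarrow> bool" where
  "L1_Linf_nonneg \<Omega> h \<longleftrightarrow> integrable (lebesgue_on \<Omega>) h \<and>
     (\<exists>C. AE x in lebesgue_on \<Omega>. \<bar>h x\<bar> \<le> C) \<and>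
     (AE x in lebesgue_on \<Omega>. 0 \<le> h x)"

definition cond_A0 :: "'a::euclidean_space set \<Rightarrow> ('a \<Rightarrow> real \<Rightarrow> ennreal) \<Rightarrow> bool" where
  "cond_A0 \<Omega> \<phi> \<longleftrightarrow> (\<exists>\<beta>. 0 < \<beta> \<and> \<beta> \<le> 1 \<and>
     ae_in \<Omega> (\<lambda>x. \<beta> \<le> phi_inv \<phi> x 1 \<and> phi_inv \<phi> x 1 \<le> 1 / \<beta>))"

definition cond_A2 :: "'a::euclidean_space set \<Rightarrow> ('a \<Rightarrow> real \<Rightarrow> ennreal) \<Rightarrow> bool" where
  "cond_A2 \<Omega> \<phi> \<longleftrightarrow> (\<forall>\<sigma> > 0. \<exists>\<beta> h. 0 < \<beta> \<and> \<beta> \<le> 1 \<and> L1_Linf_nonneg \<Omega> h \<and>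
     ae2_in \<Omega> (\<lambda>x y. \<forall>\<tau>. 0 \<le> \<tau> \<and> \<tau> \<le> \<sigma> \<longrightarrow>
        \<beta> * phi_inv \<phi> x \<tau> \<le> phi_inv \<phi> y (\<tau> + h x + h y)))"

definition cond_2 :: "'a::euclidean_space set \<Rightarrow> ('a \<Rightarrow> real \<Rightarrow> ennreal) \<Rightarrow> bool" where
  "cond_2 \<Omega> \<phi> \<longleftrightarrow> (\<forall>\<sigma> > 0. \<exists>\<beta> h. 0 < \<beta> \<and> \<beta> \<le> 1 \<and> L1_Linf_nonneg \<Omega> h \<and>
     ae2_in \<Omega> (\<lambda>x y. \<forall>t \<ge> 0. \<phi> y t \<le> ennreal \<sigma> \<longrightarrow>
        \<phi> x (\<beta> * t) \<le> \<phi> y t + ennreal (h x + h y)))"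

definition cond_3 :: "'a::euclidean_space set \<Rightarrow> ('a \<Rightarrow> real \<Rightarrow> ennreal) \<Rightarrow> bool" where
  "cond_3 \<Omega> \<phi> \<longleftrightarrow> (\<forall>\<sigma> > 0. \<exists>\<beta> h. 0 < \<beta> \<and> \<beta> \<le> 1 \<and> L1_Linf_nonneg \<Omega> h \<and>
     ae2_in \<Omega> (\<lambda>x y. \<forall>\<tau>. 0 \<le> \<tau> \<and> \<tau> \<le> \<sigma> \<longrightarrow>
        \<beta> * phi_inv \<phi> x (max \<tau> (h x + h y)) \<le> phi_inv \<phi> y (max \<tau> (h x + h y))))"

definition cond_4 :: "'a::euclidean_space set \<Rightarrow> ('a \<Rightarrow> real \<Rightarrow> ennreal) \<Rightarrow> bool" where
  "cond_4 \<Omega> \<phi> \<longleftrightarrow> (\<forall>\<sigma> > 0. \<exists>\<beta> h. 0 < \<beta> \<and> \<beta> \<le> 1 \<and> L1_Linf_nonneg \<Omega> h \<and>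
     (AE x in lebesgue_on \<Omega>. h x \<le> \<sigma> / 2) \<and>
     ae2_in \<Omega> (\<lambda>x y. \<forall>\<tau>. h x + h y \<le> \<tau> \<and> \<tau> \<le> \<sigma> \<longrightarrow>
        \<beta> * phi_inv \<phi> x \<tau> \<le> phi_inv \<phi> y \<tau>))"

definition cond_5 :: "'a::euclidean_space set \<Rightarrow> ('a \<Rightarrow> real \<Rightarrow> ennreal) \<Rightarrow> bool" where
  "cond_5 \<Omega> \<phi> \<longleftrightarrow> cond_A0 \<Omega> \<phi> \<and>
    (\<forall>\<sigma> > 0. \<exists>\<beta> h. 0 < \<beta> \<and> \<beta> \<le> 1 \<and> L1_Linf_nonneg \<Omega> h \<and>
     ae2_in \<Omega> (\<lambda>x y. \<forall>\<tau>. h x + h y \<le> \<tau> \<and> \<tau> \<le> \<sigma> \<longrightarrow>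
        \<beta> * phi_inv \<phi> x \<tau> \<le> phi_inv \<phi> y \<tau>))"

end

theory Submission
  imports Defs
begin

text \<open>
  The left inverse \<open>\<phi>\<inverse>(x, \<cdot>)\<close> of a weak \<open>\<Phi>\<close>-function is increasing and positive on
  \<open>(0, \<infinity>)\<close>, and almost increasingness of \<open>\<phi>(x, t) / t\<close> gives the doubling bound
  \<open>\<phi>\<inverse>(x, l \<tau>) \<le> a l \<phi>\<inverse>(x, \<tau>)\<close> for \<open>l \<ge> 1\<close>. Conditions (A2) and (2) express the
  same estimate on \<open>\<phi>\<inverse>\<close> and on \<open>\<phi>\<close>, up to halving \<open>\<beta>\<close> and enlarging \<open>\<sigma>\<close>.
  Comparing \<open>\<phi>\<inverse>(x, 1)\<close> with \<open>\<phi>\<inverse>(y, 1)\<close> yields (A0) from (A2) or (4). Under (A0),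
  \<open>\<phi>\<inverse>(x, \<tau>)\<close> is bounded above and below uniformly in \<open>x\<close> for \<open>\<tau>\<close> in a compact
  subinterval of \<open>(0, \<infinity>)\<close>; this handles the parameters \<open>\<tau>\<close> below the shift
  \<open>h(x) + h(y)\<close> once the shift is large, while a shift below \<open>\<tau>\<close> is absorbed by doubling:
  \<open>\<phi>\<inverse>(y, \<tau> + h(x) + h(y)) \<le> \<phi>\<inverse>(y, 2\<tau>) \<le> 2a \<phi>\<inverse>(y, \<tau>)\<close>.
\<close>

definition weak_Phi_fun :: "real \<Rightarrow> (real \<Rightarrow> ennreal) \<Rightarrow> bool" where
  "weak_Phi_fun a f \<longleftrightarrow> (\<forall>s t. 0 \<le> s \<longrightarrow> s \<le> t \<longrightarrow> f s \<le> f t) \<and>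
     f 0 = 0 \<and> (f \<longlongrightarrow> 0) (at_right 0) \<and> (f \<longlongrightarrow> top) at_top \<and>
     almost_increasing_pos a (\<lambda>t. f t / ennreal t)"

lemma weak_Phi_imp_ae_weak_Phi_fun:
  "weak_Phi \<Omega> \<phi> \<Longrightarrow> \<exists>a\<ge>1. ae_in \<Omega> (\<lambda>x. weak_Phi_fun a (\<phi> x))"
  unfolding weak_Phi_def weak_Phi_fun_def by blast

lemma phi_inv_le: "0 \<le> t \<Longrightarrow> ennreal \<tau> \<le> \<phi> x t \<Longrightarrow> phi_inv \<phi> x \<tau> \<le> t"
  unfolding phi_inv_def by (rule cInf_lower) (auto intro: bdd_belowI[of _ 0])

lemma phi_inv_leI:
  assumes "0 \<le> u" and "\<And>t. u < t \<Longrightarrow> ennreal \<tau> \<le> \<phi> x t"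
  shows "phi_inv \<phi> x \<tau> \<le> u"
proof (rule dense_ge)
  fix t assume "u < t"
  with assms show "phi_inv \<phi> x \<tau> \<le> t" by (intro phi_inv_le) auto
qed

context
  fixes a :: real and \<phi> :: "'a \<Rightarrow> real \<Rightarrow> ennreal" and x :: 'a
  assumes weak: "weak_Phi_fun a (\<phi> x)"
begin

lemma phi_mono: "0 \<le> s \<Longrightarrow> s \<le> t \<Longrightarrow> \<phi> x s \<le> \<phi> x t"
  using weak unfolding weak_Phi_fun_def by blast

lemma phi_zero: "\<phi> x 0 = 0"
  using weak unfolding weak_Phi_fun_def by blast

lemma ex_le_phi: "\<exists>t\<ge>0. ennreal \<tau> \<le> \<phi> x t"
proof -
  have "(\<phi> x \<longlongrightarrow> top) at_top" using weak unfolding weak_Phi_fun_def by blast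
  then have "eventually (\<lambda>t. ennreal \<tau> < \<phi> x t) at_top"
    by (rule order_tendstoD(1)) simp
  then obtain t0 where "\<And>t. t0 \<le> t \<Longrightarrow> ennreal \<tau> < \<phi> x t"
    by (auto simp: eventually_at_top_linorder)
  then show ?thesis by (intro exI[of _ "max t0 0"]) (auto intro: less_imp_le)
qed

lemma phi_inv_nonneg: "0 \<le> phi_inv \<phi> x \<tau>"
  unfolding phi_inv_def using ex_le_phi[of \<tau>] by (intro cInf_greatest) auto

lemma le_phi_if_phi_inv_less:
  assumes "phi_inv \<phi> x \<tau> < t"
  shows "ennreal \<tau> \<le> \<phi> x t"
proof -
  have "{t. 0 \<le> t \<and> ennreal \<tau> \<le> \<phi> x t} \<noteq> {}" using ex_le_phi[of \<tau>] by auto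
  with assms obtain s where "0 \<le> s" "ennreal \<tau> \<le> \<phi> x s" "s < t"
    unfolding phi_inv_def by (subst (asm) cInf_less_iff) (auto intro: bdd_belowI[of _ 0])
  then show ?thesis using phi_mono[of s t] by auto
qed

lemma le_phi_inv_if_phi_less: "\<phi> x t < ennreal \<tau> \<Longrightarrow> t \<le> phi_inv \<phi> x \<tau>"
  using le_phi_if_phi_inv_less[of \<tau> t] by (meson not_le)

lemma phi_inv_mono: "\<tau>1 \<le> \<tau>2 \<Longrightarrow> phi_inv \<phi> x \<tau>1 \<le> phi_inv \<phi> x \<tau>2"
  by (rule phi_inv_leI[OF phi_inv_nonneg]) (meson le_phi_if_phi_inv_less ennreal_leI order_trans)

lemma phi_inv_pos:
  assumes "0 < \<tau>"
  shows "0 < phi_inv \<phi> x \<tau>"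
proof -
  have "(\<phi> x \<longlongrightarrow> 0) (at_right 0)" using weak unfolding weak_Phi_fun_def by blast
  then have "eventually (\<lambda>t. \<phi> x t < ennreal \<tau>) (at_right (0::real))"
    by (rule order_tendstoD(2)) (use assms in simp)
  then obtain b :: real where "0 < b" and "\<And>t. 0 < t \<Longrightarrow> t < b \<Longrightarrow> \<phi> x t < ennreal \<tau>"
    unfolding eventually_at_right_field by auto
  then have "b / 2 \<le> phi_inv \<phi> x \<tau>" by (intro le_phi_inv_if_phi_less) auto
  with \<open>0 < b\<close> show ?thesis by linarith
qed

lemma mult_phi_le_phi:
  assumes "0 < a" "0 < s" "s \<le> t"
  shows "ennreal (t / (a * s)) * \<phi> x s \<le> \<phi> x t"
proof (cases "\<phi> x t" rule: ennreal_cases)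
  case (real q)
  have "\<phi> x s \<le> \<phi> x t" using assms by (intro phi_mono) auto
  with real obtain p where p: "\<phi> x s = ennreal p" "0 \<le> p"
    by (cases "\<phi> x s" rule: ennreal_cases) (auto simp: top_unique)
  have "\<phi> x s / ennreal s \<le> ennreal a * (\<phi> x t / ennreal t)"
    using weak assms unfolding weak_Phi_fun_def almost_increasing_pos_def by blast
  then have "ennreal (p / s) \<le> ennreal (a * (q / t))"
    using p real assms by (simp add: divide_ennreal ennreal_mult'[symmetric])
  moreover have "0 \<le> a * (q / t)" using real assms by simp
  ultimately have "p / s \<le> a * (q / t)" by (meson ennreal_le_iff)
  then have "t / (a * s) * p \<le> q" using assms by (simp add: field_simps)
  then show ?thesis using p real assms by (simp add: ennreal_mult'[symmetric])
qed simp

lemma phi_inv_mult_le: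
  assumes "1 \<le> a" "1 \<le> l"
  shows "phi_inv \<phi> x (l * \<tau>) \<le> a * l * phi_inv \<phi> x \<tau>"
proof (rule phi_inv_leI)
  show "0 \<le> a * l * phi_inv \<phi> x \<tau>" using assms phi_inv_nonneg by simp
  fix t assume t: "a * l * phi_inv \<phi> x \<tau> < t"
  define r where "r = t / (a * l)"
  have "phi_inv \<phi> x \<tau> < r" using t assms by (simp add: r_def field_simps)
  then have \<tau>: "ennreal \<tau> \<le> \<phi> x r" by (rule le_phi_if_phi_inv_less)
  have "0 < r" using phi_inv_nonneg[of \<tau>] \<open>phi_inv \<phi> x \<tau> < r\<close> by linarith
  have t_eq: "t = a * l * r" using assms by (simp add: r_def)
  have "1 \<le> a * l" using mult_mono[OF assms] assms by simp
  then have "ennreal (t / (a * r)) * \<phi> x r \<le> \<phi> x t"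
    using assms \<open>0 < r\<close> by (intro mult_phi_le_phi) (auto simp: t_eq mult_le_cancel_right1)
  moreover have "t / (a * r) = l" using assms \<open>0 < r\<close> by (simp add: t_eq)
  ultimately have "ennreal l * \<phi> x r \<le> \<phi> x t" by simp
  moreover have "ennreal (l * \<tau>) \<le> ennreal l * \<phi> x r"
    using \<tau> assms by (simp add: ennreal_mult' mult_left_mono)
  ultimately show "ennreal (l * \<tau>) \<le> \<phi> x t" by (rule order_trans[rotated])
qed

lemma phi_inv_one_le:
  assumes "1 \<le> a" "0 < \<epsilon>" "\<epsilon> \<le> 1" "\<epsilon> \<le> \<tau>"
  shows "\<epsilon> * phi_inv \<phi> x 1 \<le> a * phi_inv \<phi> x \<tau>"
proof -
  have "phi_inv \<phi> x ((1 / \<epsilon>) * \<epsilon>) \<le> a * (1 / \<epsilon>) * phi_inv \<phi> x \<epsilon>"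
    using assms by (intro phi_inv_mult_le) auto
  also have "\<dots> \<le> a * (1 / \<epsilon>) * phi_inv \<phi> x \<tau>"
    using assms by (intro mult_left_mono phi_inv_mono) auto
  finally show ?thesis using assms by (simp add: field_simps)
qed

lemma phi_inv_le_phi_inv_one:
  assumes "1 \<le> a" "1 \<le> M" "\<tau> \<le> M"
  shows "phi_inv \<phi> x \<tau> \<le> a * M * phi_inv \<phi> x 1"
  using phi_inv_mono[OF assms(3)] phi_inv_mult_le[OF assms(1,2), of 1] by simp

lemma absorb_shift_phi_inv:
  assumes "1 \<le> a" "0 \<le> s" "s \<le> \<tau>" "\<beta> * r \<le> phi_inv \<phi> x (\<tau> + s)"
  shows "\<beta> / (2 * a) * r \<le> phi_inv \<phi> x \<tau>"
proof -
  have "\<beta> * r \<le> phi_inv \<phi> x (2 * \<tau>)"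
    using assms(3,4) phi_inv_mono[of "\<tau> + s" "2 * \<tau>"] by linarith
  also have "\<dots> \<le> a * 2 * phi_inv \<phi> x \<tau>" using assms(1) by (intro phi_inv_mult_le) auto
  finally show ?thesis using assms(1) by (simp add: field_simps)
qed

end

text \<open>The slack \<open>\<sigma> < \<sigma>'\<close> and the factor \<open>1/2\<close> absorb the strict inequalities lost when
  passing from \<open>\<phi>\<inverse>\<close> back to \<open>\<phi>\<close>.\<close>

lemma phi_le_if_phi_inv_shifted:
  assumes wx: "weak_Phi_fun a (\<phi> x)" and wy: "weak_Phi_fun a (\<phi> y)"
    and \<beta>: "0 < \<beta>" and s: "0 \<le> s" and \<sigma>: "0 \<le> \<sigma>" "\<sigma> < \<sigma>'"
    and shifted: "\<And>\<tau>. 0 \<le> \<tau> \<Longrightarrow> \<tau> \<le> \<sigma>' \<Longrightarrow> \<beta> * phi_inv \<phi> y \<tau> \<le> phi_inv \<phi> x (\<tau> + s)"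
    and t: "0 \<le> t" "\<phi> y t \<le> ennreal \<sigma>"
  shows "\<phi> x (\<beta> / 2 * t) \<le> \<phi> y t + ennreal s"
proof (rule ccontr)
  assume "\<not> ?thesis"
  then have less: "\<phi> y t + ennreal s < \<phi> x (\<beta> / 2 * t)" by simp
  have "t \<noteq> 0" using less phi_zero[of a \<phi> x, OF wx] by (auto simp: not_less_zero)
  with t have "0 < t" by simp
  from t obtain p where p: "\<phi> y t = ennreal p" "0 \<le> p" "p \<le> \<sigma>"
    using \<sigma> by (auto simp: le_ennreal_iff)
  with less s have "ennreal (p + s) < \<phi> x (\<beta> / 2 * t)" by simp
  then obtain r where r: "ennreal (p + s) < ennreal r" "ennreal r \<le> \<phi> x (\<beta> / 2 * t)"
    by (metis dense ennreal_cases less_imp_le not_top_less)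
  have "p + s < r" using r(1) p(2) s by (metis ennreal_less_iff add_nonneg_nonneg)
  define \<tau> where "\<tau> = min \<sigma>' (r - s)"
  have \<tau>: "0 \<le> \<tau>" "\<tau> \<le> \<sigma>'" "p < \<tau>" "\<tau> + s \<le> r"
    using \<open>p + s < r\<close> p s \<sigma> by (auto simp: \<tau>_def)
  have "\<beta> * t \<le> \<beta> * phi_inv \<phi> y \<tau>"
    using p \<tau> \<beta> by (intro mult_left_mono le_phi_inv_if_phi_less[of a \<phi> y, OF wy]) (auto intro: ennreal_lessI)
  also have "\<dots> \<le> phi_inv \<phi> x (\<tau> + s)" using shifted \<tau> by blast
  also have "\<dots> \<le> \<beta> / 2 * t"
    using \<tau>(4) r(2) \<beta> t by (intro phi_inv_le) (auto intro: order_trans[OF ennreal_leI])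
  finally show False using \<beta> \<open>0 < t\<close> by simp
qed

lemma phi_inv_shifted_if_phi_le:
  assumes wy: "weak_Phi_fun a (\<phi> y)" and \<beta>: "0 < \<beta>" and s: "0 \<le> s" and \<tau>: "\<tau> \<le> \<sigma>"
    and phi_le: "\<And>t. 0 \<le> t \<Longrightarrow> \<phi> x t \<le> ennreal \<sigma> \<Longrightarrow> \<phi> y (\<beta> * t) \<le> \<phi> x t + ennreal s"
  shows "\<beta> * phi_inv \<phi> x \<tau> \<le> phi_inv \<phi> y (\<tau> + s)"
proof -
  have "phi_inv \<phi> x \<tau> \<le> phi_inv \<phi> y (\<tau> + s) / \<beta>"
  proof (rule phi_inv_leI)
    show "0 \<le> phi_inv \<phi> y (\<tau> + s) / \<beta>" using phi_inv_nonneg[of a \<phi> y, OF wy] \<beta> by simp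
    fix t assume "phi_inv \<phi> y (\<tau> + s) / \<beta> < t"
    then have "phi_inv \<phi> y (\<tau> + s) < \<beta> * t" using \<beta> by (simp add: field_simps)
    then have above: "ennreal (\<tau> + s) \<le> \<phi> y (\<beta> * t)" by (rule le_phi_if_phi_inv_less[of a \<phi> y, OF wy])
    have "0 < \<beta> * t"
      using \<open>phi_inv \<phi> y (\<tau> + s) < \<beta> * t\<close> phi_inv_nonneg[of a \<phi> y, OF wy] by (rule le_less_trans[rotated])
    then have "0 \<le> t" using \<beta> by (simp add: zero_less_mult_iff)
    show "ennreal \<tau> \<le> \<phi> x t"
    proof (rule ccontr)
      assume "\<not> ?thesis"
      then obtain p where p: "\<phi> x t = ennreal p" "0 \<le> p" "p < \<tau>"
        by (cases "\<phi> x t" rule: ennreal_cases) (auto simp: ennreal_less_iff)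
      then have "\<phi> y (\<beta> * t) \<le> ennreal (p + s)"
        using phi_le[OF \<open>0 \<le> t\<close>] \<tau> s by simp
      also have "\<dots> < ennreal (\<tau> + s)" using p s by (intro ennreal_lessI) auto
      finally show False using above by simp
    qed
  qed
  then show ?thesis using \<beta> by (simp add: field_simps)
qed

lemma min_mult_phi_inv_le_at_max_shift:
  assumes wx: "weak_Phi_fun a (\<phi> x)" and wy: "weak_Phi_fun a (\<phi> y)" and a: "1 \<le> a"
    and s: "0 \<le> s" "s \<le> M" and \<tau>: "0 \<le> \<tau>" "\<tau> \<le> \<sigma>"
    and shifted: "\<And>\<tau>. 0 \<le> \<tau> \<Longrightarrow> \<tau> \<le> \<sigma> \<Longrightarrow> \<beta> * phi_inv \<phi> x \<tau> \<le> phi_inv \<phi> y (\<tau> + s)"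
    and comparable: "\<And>\<tau>. \<sigma> \<le> \<tau> \<Longrightarrow> \<tau> \<le> M \<Longrightarrow> c * phi_inv \<phi> x \<tau> \<le> phi_inv \<phi> y \<tau>"
  shows "min (\<beta> / (2 * a)) c * phi_inv \<phi> x (max \<tau> s) \<le> phi_inv \<phi> y (max \<tau> s)"
proof -
  have "\<beta> / (2 * a) * phi_inv \<phi> x (max \<tau> s) \<le> phi_inv \<phi> y (max \<tau> s) \<or>
      c * phi_inv \<phi> x (max \<tau> s) \<le> phi_inv \<phi> y (max \<tau> s)"
  proof (cases "s \<le> \<sigma>")
    case True
    then have "\<beta> * phi_inv \<phi> x (max \<tau> s) \<le> phi_inv \<phi> y (max \<tau> s + s)"
      using shifted \<tau> s by simp
    then show ?thesis using absorb_shift_phi_inv[of a \<phi> y, OF wy a s(1)] by simp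
  next
    case False
    then show ?thesis using comparable \<tau> s by simp
  qed
  then show ?thesis using phi_inv_nonneg[of a \<phi> x, OF wx]
    by (auto simp: min_mult_distrib_right min_le_iff_disj)
qed

lemma min_mult_phi_inv_le_if_small_or_large_shift:
  assumes wx: "weak_Phi_fun a (\<phi> x)" and wy: "weak_Phi_fun a (\<phi> y)" and a: "1 \<le> a"
    and s: "0 \<le> s" and \<tau>: "\<tau> \<le> \<sigma>" "\<tau> < s \<Longrightarrow> \<epsilon> \<le> \<tau>"
    and shifted: "\<And>\<tau>. 0 \<le> \<tau> \<Longrightarrow> \<tau> \<le> \<sigma> \<Longrightarrow> \<beta> * phi_inv \<phi> x \<tau> \<le> phi_inv \<phi> y (\<tau> + s)"
    and comparable: "\<And>\<tau>. \<epsilon> \<le> \<tau> \<Longrightarrow> \<tau> \<le> \<sigma> \<Longrightarrow> c * phi_inv \<phi> x \<tau> \<le> phi_inv \<phi> y \<tau>"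
  shows "min (\<beta> / (2 * a)) c * phi_inv \<phi> x \<tau> \<le> phi_inv \<phi> y \<tau>"
proof -
  have "\<beta> / (2 * a) * phi_inv \<phi> x \<tau> \<le> phi_inv \<phi> y \<tau> \<or> c * phi_inv \<phi> x \<tau> \<le> phi_inv \<phi> y \<tau>"
  proof (cases "s \<le> \<tau>")
    case True
    then have "\<beta> * phi_inv \<phi> x \<tau> \<le> phi_inv \<phi> y (\<tau> + s)" using shifted \<tau> s by simp
    then show ?thesis using absorb_shift_phi_inv[of a \<phi> y, OF wy a s True] by simp
  next
    case False
    then show ?thesis using comparable \<tau> by simp
  qed
  then show ?thesis using phi_inv_nonneg[of a \<phi> x, OF wx]
    by (auto simp: min_mult_distrib_right min_le_iff_disj)
qed

lemma min_mult_phi_inv_le_shifted_if_above_shift: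
  assumes wx: "weak_Phi_fun a (\<phi> x)" and wy: "weak_Phi_fun a (\<phi> y)"
    and "0 \<le> \<beta>" "0 \<le> c" and s: "0 \<le> s" and \<tau>: "0 \<le> \<tau>" "\<tau> \<le> \<sigma>"
    and above: "\<And>\<tau>. s \<le> \<tau> \<Longrightarrow> \<tau> \<le> \<sigma> \<Longrightarrow> \<beta> * phi_inv \<phi> x \<tau> \<le> phi_inv \<phi> y \<tau>"
    and at_\<sigma>: "c * phi_inv \<phi> x \<sigma> \<le> phi_inv \<phi> y \<sigma>"
  shows "min \<beta> c * phi_inv \<phi> x \<tau> \<le> phi_inv \<phi> y (\<tau> + s)"
proof -
  note x_mono = phi_inv_mono[of a \<phi> x, OF wx] and y_mono = phi_inv_mono[of a \<phi> y, OF wy]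
  consider "s \<le> \<tau>" | "\<tau> < s" "s \<le> \<sigma>" | "\<sigma> < s" by linarith
  then have "\<beta> * phi_inv \<phi> x \<tau> \<le> phi_inv \<phi> y (\<tau> + s) \<or> c * phi_inv \<phi> x \<tau> \<le> phi_inv \<phi> y (\<tau> + s)"
  proof cases
    case 1
    then have "\<beta> * phi_inv \<phi> x \<tau> \<le> phi_inv \<phi> y \<tau>" using above \<tau> by blast
    also have "\<dots> \<le> phi_inv \<phi> y (\<tau> + s)" using s by (intro y_mono) simp
    finally show ?thesis ..
  next
    case 2
    have "\<beta> * phi_inv \<phi> x \<tau> \<le> \<beta> * phi_inv \<phi> x s"
      using 2 \<open>0 \<le> \<beta>\<close> by (intro mult_left_mono x_mono) simp_all
    also have "\<dots> \<le> phi_inv \<phi> y s" using 2 above by blast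
    also have "\<dots> \<le> phi_inv \<phi> y (\<tau> + s)" using \<tau> by (intro y_mono) simp
    finally show ?thesis ..
  next
    case 3
    have "c * phi_inv \<phi> x \<tau> \<le> c * phi_inv \<phi> x \<sigma>"
      using \<tau> \<open>0 \<le> c\<close> by (intro mult_left_mono x_mono) simp_all
    also have "\<dots> \<le> phi_inv \<phi> y \<sigma>" by (rule at_\<sigma>)
    also have "\<dots> \<le> phi_inv \<phi> y (\<tau> + s)" using 3 \<tau> by (intro y_mono) simp
    finally show ?thesis ..
  qed
  then show ?thesis using phi_inv_nonneg[of a \<phi> x, OF wx]
    by (auto simp: min_mult_distrib_right min_le_iff_disj)
qed

lemma ae_in_if_AE_lebesgue_on:
  assumes "\<Omega> \<in> sets lebesgue" "AE x in lebesgue_on \<Omega>. P x"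
  shows "ae_in \<Omega> P"
proof -
  from assms(2) obtain N where N: "{x \<in> space (lebesgue_on \<Omega>). \<not> P x} \<subseteq> N"
    "emeasure (lebesgue_on \<Omega>) N = 0" "N \<in> sets (lebesgue_on \<Omega>)" by (rule AE_E)
  then have "N \<in> null_sets lebesgue" using null_sets_restrict_space[OF assms(1)] by blast
  with N(1) show ?thesis unfolding ae_in_def by (intro bexI[of _ N]) auto
qed

lemma ae_in_conjI:
  assumes "ae_in \<Omega> P" "ae_in \<Omega> Q"
  shows "ae_in \<Omega> (\<lambda>x. P x \<and> Q x)"
proof -
  from assms obtain N1 N2 where "N1 \<in> null_sets lebesgue" "\<forall>x\<in>\<Omega> - N1. P x"
    and "N2 \<in> null_sets lebesgue" "\<forall>x\<in>\<Omega> - N2. Q x"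
    unfolding ae_in_def by blast
  then show ?thesis unfolding ae_in_def by (intro bexI[of _ "N1 \<union> N2"]) auto
qed

lemma ae2_in_conjI:
  assumes "ae2_in \<Omega> P" "ae2_in \<Omega> Q"
  shows "ae2_in \<Omega> (\<lambda>x y. P x y \<and> Q x y)"
proof -
  from assms obtain N1 N2 where "N1 \<in> null_sets lebesgue" "\<forall>x\<in>\<Omega> - N1. \<forall>y\<in>\<Omega> - N1. P x y"
    and "N2 \<in> null_sets lebesgue" "\<forall>x\<in>\<Omega> - N2. \<forall>y\<in>\<Omega> - N2. Q x y"
    unfolding ae2_in_def by blast
  then show ?thesis unfolding ae2_in_def by (intro bexI[of _ "N1 \<union> N2"]) auto
qed

lemma ae2_in_swap: "ae2_in \<Omega> P \<Longrightarrow> ae2_in \<Omega> (\<lambda>x y. P y x)"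
  unfolding ae2_in_def by blast

lemma ae2_in_of_ae_in:
  "ae_in \<Omega> P \<Longrightarrow> (\<And>x y. P x \<Longrightarrow> P y \<Longrightarrow> Q x y) \<Longrightarrow> ae2_in \<Omega> Q"
  unfolding ae_in_def ae2_in_def by blast

lemma ae2_in_mono_ae_in:
  assumes "ae_in \<Omega> P" "ae2_in \<Omega> Q" "\<And>x y. P x \<Longrightarrow> P y \<Longrightarrow> Q x y \<Longrightarrow> R x y"
  shows "ae2_in \<Omega> R"
proof -
  from assms(1,2) obtain N1 N2 where "N1 \<in> null_sets lebesgue" "\<forall>x\<in>\<Omega> - N1. P x"
    and "N2 \<in> null_sets lebesgue" "\<forall>x\<in>\<Omega> - N2. \<forall>y\<in>\<Omega> - N2. Q x y"
    unfolding ae_in_def ae2_in_def by blast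
  with assms(3) show ?thesis unfolding ae2_in_def by (intro bexI[of _ "N1 \<union> N2"]) auto
qed

lemma le_if_min_add_min_le_less_add:
  fixes u v c \<tau> :: real
  assumes "0 \<le> u" "0 \<le> v" "0 \<le> c" "min u c + min v c \<le> \<tau>" "\<tau> < u + v"
  shows "c \<le> \<tau>"
  using assms by (auto simp: min_def split: if_splits)

lemma L1_Linf_nonneg_ae_bounded:
  assumes "\<Omega> \<in> sets lebesgue" "L1_Linf_nonneg \<Omega> h"
  shows "\<exists>C\<ge>0. ae_in \<Omega> (\<lambda>x. 0 \<le> h x \<and> h x \<le> C)"
proof -
  from assms(2) obtain C where "AE x in lebesgue_on \<Omega>. \<bar>h x\<bar> \<le> C" "AE x in lebesgue_on \<Omega>. 0 \<le> h x"
    unfolding L1_Linf_nonneg_def by blast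
  then have "AE x in lebesgue_on \<Omega>. 0 \<le> h x \<and> h x \<le> max C 0" by eventually_elim auto
  then show ?thesis using ae_in_if_AE_lebesgue_on[OF assms(1)] by (intro exI[of _ "max C 0"]) auto
qed

lemma L1_Linf_nonneg_min:
  assumes "L1_Linf_nonneg \<Omega> h" "0 \<le> c"
  shows "L1_Linf_nonneg \<Omega> (\<lambda>x. min (h x) c)"
proof -
  from assms(1) obtain C where h: "integrable (lebesgue_on \<Omega>) h"
    and bounded: "AE x in lebesgue_on \<Omega>. \<bar>h x\<bar> \<le> C" and nonneg: "AE x in lebesgue_on \<Omega>. 0 \<le> h x"
    unfolding L1_Linf_nonneg_def by blast
  have "integrable (lebesgue_on \<Omega>) (\<lambda>x. min (h x) c)"
  proof (rule Bochner_Integration.integrable_bound[OF h])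
    show "(\<lambda>x. min (h x) c) \<in> borel_measurable (lebesgue_on \<Omega>)"
      using borel_measurable_integrable[OF h] by measurable
    show "AE x in lebesgue_on \<Omega>. norm (min (h x) c) \<le> norm (h x)"
      using nonneg by eventually_elim (use assms(2) in auto)
  qed
  moreover have "AE x in lebesgue_on \<Omega>. \<bar>min (h x) c\<bar> \<le> C \<and> 0 \<le> min (h x) c"
    using nonneg bounded by eventually_elim (use assms(2) in auto)
  ultimately show ?thesis unfolding L1_Linf_nonneg_def by auto
qed

context
  fixes \<Omega> :: "'a::euclidean_space set" and \<phi> :: "'a \<Rightarrow> real \<Rightarrow> ennreal" and a :: real
  assumes measurable: "\<Omega> \<in> sets lebesgue" and a: "1 \<le> a"
    and weak: "ae_in \<Omega> (\<lambda>x. weak_Phi_fun a (\<phi> x))"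
begin

lemma ae_weak_Phi_fun_and_bounded:
  assumes "L1_Linf_nonneg \<Omega> h"
  obtains C where "0 \<le> C" "ae_in \<Omega> (\<lambda>x. weak_Phi_fun a (\<phi> x) \<and> 0 \<le> h x \<and> h x \<le> C)"
  using L1_Linf_nonneg_ae_bounded[OF measurable assms] ae_in_conjI[OF weak] by blast

lemma cond_A0_if_phi_inv_one_comparable:
  assumes K: "0 < K" and comparable: "ae2_in \<Omega> (\<lambda>x y. phi_inv \<phi> x 1 \<le> K * phi_inv \<phi> y 1)"
  shows "cond_A0 \<Omega> \<phi>"
proof -
  have "ae2_in \<Omega> (\<lambda>x y. weak_Phi_fun a (\<phi> x) \<and> phi_inv \<phi> x 1 \<le> K * phi_inv \<phi> y 1)"
    using weak comparable by (rule ae2_in_mono_ae_in) simp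
  then obtain N where N: "N \<in> null_sets lebesgue" and good: "\<And>x y. x \<in> \<Omega> - N \<Longrightarrow> y \<in> \<Omega> - N \<Longrightarrow>
      weak_Phi_fun a (\<phi> x) \<and> phi_inv \<phi> x 1 \<le> K * phi_inv \<phi> y 1"
    unfolding ae2_in_def by blast
  show ?thesis
  proof (cases "\<Omega> - N = {}")
    case True
    with N show ?thesis unfolding cond_A0_def ae_in_def by (intro exI[of _ 1]) auto
  next
    case False
    then obtain y0 where y0: "y0 \<in> \<Omega> - N" by blast
    define v where "v = phi_inv \<phi> y0 1"
    have "0 < v" unfolding v_def using good[OF y0 y0] by (intro phi_inv_pos) auto
    define \<beta> where "\<beta> = min 1 (min (v / K) (1 / (K * v)))"
    have "0 < \<beta>" using \<open>0 < v\<close> K by (simp add: \<beta>_def)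
    have "\<beta> \<le> phi_inv \<phi> x 1 \<and> phi_inv \<phi> x 1 \<le> 1 / \<beta>" if x: "x \<in> \<Omega> - N" for x
    proof
      have "v \<le> K * phi_inv \<phi> x 1" using good[OF y0 x] by (simp add: v_def)
      then have "v / K \<le> phi_inv \<phi> x 1" using K by (simp add: field_simps)
      then show "\<beta> \<le> phi_inv \<phi> x 1" unfolding \<beta>_def by linarith
      have "\<beta> \<le> 1 / (K * v)" unfolding \<beta>_def by linarith
      then have "K * v \<le> 1 / \<beta>" using K \<open>0 < v\<close> \<open>0 < \<beta>\<close> by (simp add: field_simps)
      moreover have "phi_inv \<phi> x 1 \<le> K * v" using good[OF x y0] by (simp add: v_def)
      ultimately show "phi_inv \<phi> x 1 \<le> 1 / \<beta>" by linarith
    qed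
    with N \<open>0 < \<beta>\<close> show ?thesis
      unfolding cond_A0_def ae_in_def by (intro exI[of _ \<beta>]) (auto simp: \<beta>_def)
  qed
qed

lemma phi_inv_comparable_if_cond_A0:
  assumes A0: "cond_A0 \<Omega> \<phi>" and \<epsilon>: "0 < \<epsilon>" "\<epsilon> \<le> M"
  shows "\<exists>c>0. ae2_in \<Omega> (\<lambda>x y. \<forall>\<tau>. \<epsilon> \<le> \<tau> \<and> \<tau> \<le> M \<longrightarrow>
     c * phi_inv \<phi> x \<tau> \<le> phi_inv \<phi> y \<tau>)"
proof -
  from A0 obtain \<beta> where "0 < \<beta>"
    and one: "ae_in \<Omega> (\<lambda>x. \<beta> \<le> phi_inv \<phi> x 1 \<and> phi_inv \<phi> x 1 \<le> 1 / \<beta>)"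
    unfolding cond_A0_def by blast
  define L where "L = min \<epsilon> 1 * \<beta> / a"
  define U where "U = a * max M 1 / \<beta>"
  have "0 < L" "0 < U" using \<epsilon> a \<open>0 < \<beta>\<close> by (auto simp: L_def U_def)
  have bounds: "L \<le> phi_inv \<phi> x \<tau> \<and> phi_inv \<phi> x \<tau> \<le> U"
    if x: "weak_Phi_fun a (\<phi> x) \<and> \<beta> \<le> phi_inv \<phi> x 1 \<and> phi_inv \<phi> x 1 \<le> 1 / \<beta>"
      and \<tau>: "\<epsilon> \<le> \<tau>" "\<tau> \<le> M" for x \<tau>
  proof
    have "min \<epsilon> 1 * \<beta> \<le> min \<epsilon> 1 * phi_inv \<phi> x 1" using x \<epsilon> by (intro mult_left_mono) auto
    also have "\<dots> \<le> a * phi_inv \<phi> x \<tau>" using x \<epsilon> \<tau> a by (intro phi_inv_one_le) auto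
    finally show "L \<le> phi_inv \<phi> x \<tau>" using a by (simp add: L_def field_simps)
    have "phi_inv \<phi> x \<tau> \<le> a * max M 1 * phi_inv \<phi> x 1" using x \<tau> a by (intro phi_inv_le_phi_inv_one) auto
    also have "\<dots> \<le> a * max M 1 * (1 / \<beta>)" using x a by (intro mult_left_mono) auto
    finally show "phi_inv \<phi> x \<tau> \<le> U" by (simp add: U_def)
  qed
  have "ae2_in \<Omega> (\<lambda>x y. \<forall>\<tau>. \<epsilon> \<le> \<tau> \<and> \<tau> \<le> M \<longrightarrow> L / U * phi_inv \<phi> x \<tau> \<le> phi_inv \<phi> y \<tau>)"
  proof (rule ae2_in_of_ae_in[OF ae_in_conjI[OF weak one]], intro allI impI)
    fix x y \<tau>
    assume x: "weak_Phi_fun a (\<phi> x) \<and> \<beta> \<le> phi_inv \<phi> x 1 \<and> phi_inv \<phi> x 1 \<le> 1 / \<beta>"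
      and y: "weak_Phi_fun a (\<phi> y) \<and> \<beta> \<le> phi_inv \<phi> y 1 \<and> phi_inv \<phi> y 1 \<le> 1 / \<beta>"
      and \<tau>: "\<epsilon> \<le> \<tau> \<and> \<tau> \<le> M"
    have "L / U * phi_inv \<phi> x \<tau> \<le> L / U * U"
      using bounds[OF x] \<tau> \<open>0 < L\<close> \<open>0 < U\<close> by (intro mult_left_mono) auto
    also have "\<dots> \<le> phi_inv \<phi> y \<tau>" using bounds[OF y] \<tau> \<open>0 < U\<close> by simp
    finally show "L / U * phi_inv \<phi> x \<tau> \<le> phi_inv \<phi> y \<tau>" .
  qed
  with \<open>0 < L\<close> \<open>0 < U\<close> show ?thesis by (intro exI[of _ "L / U"]) auto
qed

lemma cond_2_if_cond_A2:
  assumes "cond_A2 \<Omega> \<phi>"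
  shows "cond_2 \<Omega> \<phi>"
  unfolding cond_2_def
proof (intro allI impI)
  fix \<sigma> :: real assume "0 < \<sigma>"
  with assms obtain \<beta> h where \<beta>: "0 < \<beta>" "\<beta> \<le> 1" and h: "L1_Linf_nonneg \<Omega> h"
    and shifted: "ae2_in \<Omega> (\<lambda>x y. \<forall>\<tau>. 0 \<le> \<tau> \<and> \<tau> \<le> \<sigma> + 1 \<longrightarrow>
        \<beta> * phi_inv \<phi> x \<tau> \<le> phi_inv \<phi> y (\<tau> + h x + h y))"
    unfolding cond_A2_def by (meson add_pos_pos zero_less_one)
  obtain C where good: "ae_in \<Omega> (\<lambda>x. weak_Phi_fun a (\<phi> x) \<and> 0 \<le> h x \<and> h x \<le> C)"
    using ae_weak_Phi_fun_and_bounded[OF h] by blast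
  have "ae2_in \<Omega> (\<lambda>x y. \<forall>t \<ge> 0. \<phi> y t \<le> ennreal \<sigma> \<longrightarrow>
      \<phi> x (\<beta> / 2 * t) \<le> \<phi> y t + ennreal (h x + h y))"
    using good ae2_in_swap[OF shifted]
  proof (rule ae2_in_mono_ae_in, intro allI impI)
    fix x y t
    assume x: "weak_Phi_fun a (\<phi> x) \<and> 0 \<le> h x \<and> h x \<le> C"
      and y: "weak_Phi_fun a (\<phi> y) \<and> 0 \<le> h y \<and> h y \<le> C"
      and shifted: "\<forall>\<tau>. 0 \<le> \<tau> \<and> \<tau> \<le> \<sigma> + 1 \<longrightarrow>
        \<beta> * phi_inv \<phi> y \<tau> \<le> phi_inv \<phi> x (\<tau> + h y + h x)"
      and t: "0 \<le> t" "\<phi> y t \<le> ennreal \<sigma>"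
    have "\<phi> x (\<beta> / 2 * t) \<le> \<phi> y t + ennreal (h y + h x)"
      using x y shifted \<beta> t \<open>0 < \<sigma>\<close>
      by (intro phi_le_if_phi_inv_shifted[where \<sigma>' = "\<sigma> + 1"]) (auto simp: add.assoc)
    then show "\<phi> x (\<beta> / 2 * t) \<le> \<phi> y t + ennreal (h x + h y)" by (simp add: add.commute)
  qed
  with \<beta> h show "\<exists>\<beta> h. 0 < \<beta> \<and> \<beta> \<le> 1 \<and> L1_Linf_nonneg \<Omega> h \<and>
      ae2_in \<Omega> (\<lambda>x y. \<forall>t \<ge> 0. \<phi> y t \<le> ennreal \<sigma> \<longrightarrow> \<phi> x (\<beta> * t) \<le> \<phi> y t + ennreal (h x + h y))"
    by (intro exI[of _ "\<beta> / 2"] exI[of _ h]) auto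
qed

lemma cond_A2_if_cond_2:
  assumes "cond_2 \<Omega> \<phi>"
  shows "cond_A2 \<Omega> \<phi>"
  unfolding cond_A2_def
proof (intro allI impI)
  fix \<sigma> :: real assume "0 < \<sigma>"
  with assms obtain \<beta> h where \<beta>: "0 < \<beta>" "\<beta> \<le> 1" and h: "L1_Linf_nonneg \<Omega> h"
    and phi_le: "ae2_in \<Omega> (\<lambda>x y. \<forall>t \<ge> 0. \<phi> y t \<le> ennreal \<sigma> \<longrightarrow>
        \<phi> x (\<beta> * t) \<le> \<phi> y t + ennreal (h x + h y))"
    unfolding cond_2_def by blast
  obtain C where good: "ae_in \<Omega> (\<lambda>x. weak_Phi_fun a (\<phi> x) \<and> 0 \<le> h x \<and> h x \<le> C)"
    using ae_weak_Phi_fun_and_bounded[OF h] by blast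
  have "ae2_in \<Omega> (\<lambda>x y. \<forall>\<tau>. 0 \<le> \<tau> \<and> \<tau> \<le> \<sigma> \<longrightarrow>
      \<beta> * phi_inv \<phi> x \<tau> \<le> phi_inv \<phi> y (\<tau> + h x + h y))"
    using good ae2_in_swap[OF phi_le]
  proof (rule ae2_in_mono_ae_in, intro allI impI)
    fix x y \<tau>
    assume x: "weak_Phi_fun a (\<phi> x) \<and> 0 \<le> h x \<and> h x \<le> C"
      and y: "weak_Phi_fun a (\<phi> y) \<and> 0 \<le> h y \<and> h y \<le> C"
      and phi_le: "\<forall>t \<ge> 0. \<phi> x t \<le> ennreal \<sigma> \<longrightarrow> \<phi> y (\<beta> * t) \<le> \<phi> x t + ennreal (h y + h x)"
      and \<tau>: "0 \<le> \<tau> \<and> \<tau> \<le> \<sigma>"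
    have "\<beta> * phi_inv \<phi> x \<tau> \<le> phi_inv \<phi> y (\<tau> + (h y + h x))"
      using x y phi_le \<beta> \<tau> by (intro phi_inv_shifted_if_phi_le[where \<sigma> = \<sigma>]) auto
    then show "\<beta> * phi_inv \<phi> x \<tau> \<le> phi_inv \<phi> y (\<tau> + h x + h y)" by (simp add: ac_simps)
  qed
  with \<beta> h show "\<exists>\<beta> h. 0 < \<beta> \<and> \<beta> \<le> 1 \<and> L1_Linf_nonneg \<Omega> h \<and>
      ae2_in \<Omega> (\<lambda>x y. \<forall>\<tau>. 0 \<le> \<tau> \<and> \<tau> \<le> \<sigma> \<longrightarrow> \<beta> * phi_inv \<phi> x \<tau> \<le> phi_inv \<phi> y (\<tau> + h x + h y))"
    by blast
qed

lemma cond_A0_if_cond_A2: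
  assumes "cond_A2 \<Omega> \<phi>"
  shows "cond_A0 \<Omega> \<phi>"
proof -
  from assms obtain \<beta> h where "0 < \<beta>" and h: "L1_Linf_nonneg \<Omega> h"
    and shifted: "ae2_in \<Omega> (\<lambda>x y. \<forall>\<tau>. 0 \<le> \<tau> \<and> \<tau> \<le> 1 \<longrightarrow>
        \<beta> * phi_inv \<phi> x \<tau> \<le> phi_inv \<phi> y (\<tau> + h x + h y))"
    unfolding cond_A2_def by (meson zero_less_one)
  obtain C where "0 \<le> C" and good: "ae_in \<Omega> (\<lambda>x. weak_Phi_fun a (\<phi> x) \<and> 0 \<le> h x \<and> h x \<le> C)"
    using ae_weak_Phi_fun_and_bounded[OF h] by blast
  have "ae2_in \<Omega> (\<lambda>x y. phi_inv \<phi> x 1 \<le> a * (1 + 2 * C) / \<beta> * phi_inv \<phi> y 1)"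
    using good shifted
  proof (rule ae2_in_mono_ae_in)
    fix x y
    assume x: "weak_Phi_fun a (\<phi> x) \<and> 0 \<le> h x \<and> h x \<le> C"
      and y: "weak_Phi_fun a (\<phi> y) \<and> 0 \<le> h y \<and> h y \<le> C"
      and "\<forall>\<tau>. 0 \<le> \<tau> \<and> \<tau> \<le> 1 \<longrightarrow> \<beta> * phi_inv \<phi> x \<tau> \<le> phi_inv \<phi> y (\<tau> + h x + h y)"
    then have "\<beta> * phi_inv \<phi> x 1 \<le> phi_inv \<phi> y (1 + h x + h y)" by simp
    also have "\<dots> \<le> phi_inv \<phi> y ((1 + 2 * C) * 1)" using x y by (intro phi_inv_mono) auto
    also have "\<dots> \<le> a * (1 + 2 * C) * phi_inv \<phi> y 1"
      using y a \<open>0 \<le> C\<close> by (intro phi_inv_mult_le) auto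
    finally show "phi_inv \<phi> x 1 \<le> a * (1 + 2 * C) / \<beta> * phi_inv \<phi> y 1"
      using \<open>0 < \<beta>\<close> by (simp add: field_simps)
  qed
  then show ?thesis
    by (rule cond_A0_if_phi_inv_one_comparable[rotated]) (use a \<open>0 \<le> C\<close> \<open>0 < \<beta>\<close> in simp)
qed

lemma cond_3_if_cond_A2:
  assumes A2: "cond_A2 \<Omega> \<phi>"
  shows "cond_3 \<Omega> \<phi>"
  unfolding cond_3_def
proof (intro allI impI)
  fix \<sigma> :: real assume "0 < \<sigma>"
  with A2 obtain \<beta> h where \<beta>: "0 < \<beta>" "\<beta> \<le> 1" and h: "L1_Linf_nonneg \<Omega> h"
    and shifted: "ae2_in \<Omega> (\<lambda>x y. \<forall>\<tau>. 0 \<le> \<tau> \<and> \<tau> \<le> \<sigma> \<longrightarrow>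
        \<beta> * phi_inv \<phi> x \<tau> \<le> phi_inv \<phi> y (\<tau> + h x + h y))"
    unfolding cond_A2_def by blast
  obtain C where good: "ae_in \<Omega> (\<lambda>x. weak_Phi_fun a (\<phi> x) \<and> 0 \<le> h x \<and> h x \<le> C)"
    using ae_weak_Phi_fun_and_bounded[OF h] by blast
  obtain c where "0 < c" and comparable: "ae2_in \<Omega> (\<lambda>x y. \<forall>\<tau>. \<sigma> \<le> \<tau> \<and> \<tau> \<le> max \<sigma> (2 * C) \<longrightarrow>
      c * phi_inv \<phi> x \<tau> \<le> phi_inv \<phi> y \<tau>)"
    using phi_inv_comparable_if_cond_A0[OF cond_A0_if_cond_A2[OF A2] \<open>0 < \<sigma>\<close> max.cobounded1] by blast
  define \<beta>' where "\<beta>' = min (\<beta> / (2 * a)) c"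
  have "\<beta> / (2 * a) \<le> 1" using \<beta> a by (simp add: divide_le_eq)
  then have \<beta>': "0 < \<beta>'" "\<beta>' \<le> 1" using \<beta> \<open>0 < c\<close> a by (auto simp: \<beta>'_def min.coboundedI1)
  have "ae2_in \<Omega> (\<lambda>x y. \<forall>\<tau>. 0 \<le> \<tau> \<and> \<tau> \<le> \<sigma> \<longrightarrow>
      \<beta>' * phi_inv \<phi> x (max \<tau> (h x + h y)) \<le> phi_inv \<phi> y (max \<tau> (h x + h y)))"
    using good ae2_in_conjI[OF shifted comparable] unfolding \<beta>'_def
    by (rule ae2_in_mono_ae_in)
      (auto intro!: min_mult_phi_inv_le_at_max_shift[where M = "max \<sigma> (2 * C)"] a simp: add.assoc)
  with \<beta>' h show "\<exists>\<beta> h. 0 < \<beta> \<and> \<beta> \<le> 1 \<and> L1_Linf_nonneg \<Omega> h \<and>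
      ae2_in \<Omega> (\<lambda>x y. \<forall>\<tau>. 0 \<le> \<tau> \<and> \<tau> \<le> \<sigma> \<longrightarrow>
        \<beta> * phi_inv \<phi> x (max \<tau> (h x + h y)) \<le> phi_inv \<phi> y (max \<tau> (h x + h y)))"
    by blast
qed

lemma cond_A2_if_cond_3:
  assumes "cond_3 \<Omega> \<phi>"
  shows "cond_A2 \<Omega> \<phi>"
  unfolding cond_A2_def
proof (intro allI impI)
  fix \<sigma> :: real assume "0 < \<sigma>"
  with assms obtain \<beta> h where \<beta>: "0 < \<beta>" "\<beta> \<le> 1" and h: "L1_Linf_nonneg \<Omega> h"
    and at_max: "ae2_in \<Omega> (\<lambda>x y. \<forall>\<tau>. 0 \<le> \<tau> \<and> \<tau> \<le> \<sigma> \<longrightarrow>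
        \<beta> * phi_inv \<phi> x (max \<tau> (h x + h y)) \<le> phi_inv \<phi> y (max \<tau> (h x + h y)))"
    unfolding cond_3_def by blast
  obtain C where good: "ae_in \<Omega> (\<lambda>x. weak_Phi_fun a (\<phi> x) \<and> 0 \<le> h x \<and> h x \<le> C)"
    using ae_weak_Phi_fun_and_bounded[OF h] by blast
  have "ae2_in \<Omega> (\<lambda>x y. \<forall>\<tau>. 0 \<le> \<tau> \<and> \<tau> \<le> \<sigma> \<longrightarrow>
      \<beta> * phi_inv \<phi> x \<tau> \<le> phi_inv \<phi> y (\<tau> + h x + h y))"
    using good at_max
  proof (rule ae2_in_mono_ae_in, intro allI impI)
    fix x y \<tau>
    assume x: "weak_Phi_fun a (\<phi> x) \<and> 0 \<le> h x \<and> h x \<le> C"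
      and y: "weak_Phi_fun a (\<phi> y) \<and> 0 \<le> h y \<and> h y \<le> C"
      and at_max: "\<forall>\<tau>. 0 \<le> \<tau> \<and> \<tau> \<le> \<sigma> \<longrightarrow>
        \<beta> * phi_inv \<phi> x (max \<tau> (h x + h y)) \<le> phi_inv \<phi> y (max \<tau> (h x + h y))"
      and \<tau>: "0 \<le> \<tau> \<and> \<tau> \<le> \<sigma>"
    have "\<beta> * phi_inv \<phi> x \<tau> \<le> \<beta> * phi_inv \<phi> x (max \<tau> (h x + h y))"
      using x \<beta> by (intro mult_left_mono phi_inv_mono) auto
    also have "\<dots> \<le> phi_inv \<phi> y (max \<tau> (h x + h y))" using at_max \<tau> by blast
    also have "\<dots> \<le> phi_inv \<phi> y (\<tau> + h x + h y)" using x y \<tau> by (intro phi_inv_mono) auto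
    finally show "\<beta> * phi_inv \<phi> x \<tau> \<le> phi_inv \<phi> y (\<tau> + h x + h y)" .
  qed
  with \<beta> h show "\<exists>\<beta> h. 0 < \<beta> \<and> \<beta> \<le> 1 \<and> L1_Linf_nonneg \<Omega> h \<and>
      ae2_in \<Omega> (\<lambda>x y. \<forall>\<tau>. 0 \<le> \<tau> \<and> \<tau> \<le> \<sigma> \<longrightarrow> \<beta> * phi_inv \<phi> x \<tau> \<le> phi_inv \<phi> y (\<tau> + h x + h y))"
    by blast
qed

lemma cond_4_if_cond_A2:
  assumes A2: "cond_A2 \<Omega> \<phi>"
  shows "cond_4 \<Omega> \<phi>"
  unfolding cond_4_def
proof (intro allI impI)
  fix \<sigma> :: real assume "0 < \<sigma>"
  with A2 obtain \<beta> h where \<beta>: "0 < \<beta>" "\<beta> \<le> 1" and h: "L1_Linf_nonneg \<Omega> h"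
    and shifted: "ae2_in \<Omega> (\<lambda>x y. \<forall>\<tau>. 0 \<le> \<tau> \<and> \<tau> \<le> \<sigma> \<longrightarrow>
        \<beta> * phi_inv \<phi> x \<tau> \<le> phi_inv \<phi> y (\<tau> + h x + h y))"
    unfolding cond_A2_def by blast
  obtain C where good: "ae_in \<Omega> (\<lambda>x. weak_Phi_fun a (\<phi> x) \<and> 0 \<le> h x \<and> h x \<le> C)"
    using ae_weak_Phi_fun_and_bounded[OF h] by blast
  obtain c where "0 < c" and comparable: "ae2_in \<Omega> (\<lambda>x y. \<forall>\<tau>. \<sigma> / 2 \<le> \<tau> \<and> \<tau> \<le> \<sigma> \<longrightarrow>
      c * phi_inv \<phi> x \<tau> \<le> phi_inv \<phi> y \<tau>)"
    using phi_inv_comparable_if_cond_A0[OF cond_A0_if_cond_A2[OF A2], of "\<sigma> / 2" \<sigma>] \<open>0 < \<sigma>\<close> by auto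
  define \<beta>' where "\<beta>' = min (\<beta> / (2 * a)) c"
  have "\<beta> / (2 * a) \<le> 1" using \<beta> a by (simp add: divide_le_eq)
  then have \<beta>': "0 < \<beta>'" "\<beta>' \<le> 1" using \<beta> \<open>0 < c\<close> a by (auto simp: \<beta>'_def min.coboundedI1)
  define h' where "h' = (\<lambda>x. min (h x) (\<sigma> / 2))"
  have h': "L1_Linf_nonneg \<Omega> h'" "AE x in lebesgue_on \<Omega>. h' x \<le> \<sigma> / 2"
    unfolding h'_def using L1_Linf_nonneg_min[OF h] \<open>0 < \<sigma>\<close> by simp_all
  have "ae2_in \<Omega> (\<lambda>x y. \<forall>\<tau>. h' x + h' y \<le> \<tau> \<and> \<tau> \<le> \<sigma> \<longrightarrow>
      \<beta>' * phi_inv \<phi> x \<tau> \<le> phi_inv \<phi> y \<tau>)"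
    using good ae2_in_conjI[OF shifted comparable]
  proof (rule ae2_in_mono_ae_in, intro allI impI)
    fix x y \<tau>
    assume "weak_Phi_fun a (\<phi> x) \<and> 0 \<le> h x \<and> h x \<le> C" "weak_Phi_fun a (\<phi> y) \<and> 0 \<le> h y \<and> h y \<le> C"
      and "(\<forall>\<tau>. 0 \<le> \<tau> \<and> \<tau> \<le> \<sigma> \<longrightarrow> \<beta> * phi_inv \<phi> x \<tau> \<le> phi_inv \<phi> y (\<tau> + h x + h y)) \<and>
        (\<forall>\<tau>. \<sigma> / 2 \<le> \<tau> \<and> \<tau> \<le> \<sigma> \<longrightarrow> c * phi_inv \<phi> x \<tau> \<le> phi_inv \<phi> y \<tau>)"
      and "h' x + h' y \<le> \<tau> \<and> \<tau> \<le> \<sigma>"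
    then show "\<beta>' * phi_inv \<phi> x \<tau> \<le> phi_inv \<phi> y \<tau>" unfolding \<beta>'_def
      by (intro min_mult_phi_inv_le_if_small_or_large_shift[where s = "h x + h y" and \<epsilon> = "\<sigma> / 2"])
        (use a \<open>0 < \<sigma>\<close> le_if_min_add_min_le_less_add[of "h x" "h y" "\<sigma> / 2" \<tau>] in \<open>auto simp: add.assoc h'_def\<close>)
  qed
  with \<beta>' h' show "\<exists>\<beta> h. 0 < \<beta> \<and> \<beta> \<le> 1 \<and> L1_Linf_nonneg \<Omega> h \<and>
      (AE x in lebesgue_on \<Omega>. h x \<le> \<sigma> / 2) \<and>
      ae2_in \<Omega> (\<lambda>x y. \<forall>\<tau>. h x + h y \<le> \<tau> \<and> \<tau> \<le> \<sigma> \<longrightarrow> \<beta> * phi_inv \<phi> x \<tau> \<le> phi_inv \<phi> y \<tau>)"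
    by blast
qed

lemma cond_A0_if_cond_4:
  assumes "cond_4 \<Omega> \<phi>"
  shows "cond_A0 \<Omega> \<phi>"
proof -
  from assms obtain \<beta> h where "0 < \<beta>" and "AE x in lebesgue_on \<Omega>. h x \<le> 1"
    and below_two: "ae2_in \<Omega> (\<lambda>x y. \<forall>\<tau>. h x + h y \<le> \<tau> \<and> \<tau> \<le> 2 \<longrightarrow>
        \<beta> * phi_inv \<phi> x \<tau> \<le> phi_inv \<phi> y \<tau>)"
    unfolding cond_4_def by (auto dest: spec[of _ 2])
  then have good: "ae_in \<Omega> (\<lambda>x. weak_Phi_fun a (\<phi> x) \<and> h x \<le> 1)"
    using ae_in_conjI[OF weak ae_in_if_AE_lebesgue_on[OF measurable]] by blast
  have "ae2_in \<Omega> (\<lambda>x y. phi_inv \<phi> x 1 \<le> a * 2 / \<beta> * phi_inv \<phi> y 1)"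
    using good below_two
  proof (rule ae2_in_mono_ae_in)
    fix x y
    assume x: "weak_Phi_fun a (\<phi> x) \<and> h x \<le> 1" and y: "weak_Phi_fun a (\<phi> y) \<and> h y \<le> 1"
      and below_two: "\<forall>\<tau>. h x + h y \<le> \<tau> \<and> \<tau> \<le> 2 \<longrightarrow> \<beta> * phi_inv \<phi> x \<tau> \<le> phi_inv \<phi> y \<tau>"
    have "\<beta> * phi_inv \<phi> x 1 \<le> \<beta> * phi_inv \<phi> x 2"
      using x \<open>0 < \<beta>\<close> by (intro mult_left_mono phi_inv_mono) auto
    also have "\<dots> \<le> phi_inv \<phi> y (2 * 1)" using below_two x y by simp
    also have "\<dots> \<le> a * 2 * phi_inv \<phi> y 1" using y a by (intro phi_inv_mult_le) auto
    finally show "phi_inv \<phi> x 1 \<le> a * 2 / \<beta> * phi_inv \<phi> y 1"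
      using \<open>0 < \<beta>\<close> by (simp add: field_simps)
  qed
  then show ?thesis
    by (rule cond_A0_if_phi_inv_one_comparable[rotated]) (use a \<open>0 < \<beta>\<close> in simp)
qed

lemma cond_5_if_cond_4: "cond_4 \<Omega> \<phi> \<Longrightarrow> cond_5 \<Omega> \<phi>"
  using cond_A0_if_cond_4 unfolding cond_5_def by (simp add: cond_4_def) fast

lemma cond_A2_if_cond_5:
  assumes "cond_5 \<Omega> \<phi>"
  shows "cond_A2 \<Omega> \<phi>"
  unfolding cond_A2_def
proof (intro allI impI)
  fix \<sigma> :: real assume "0 < \<sigma>"
  with assms obtain \<beta> h where \<beta>: "0 < \<beta>" "\<beta> \<le> 1" and h: "L1_Linf_nonneg \<Omega> h"
    and above: "ae2_in \<Omega> (\<lambda>x y. \<forall>\<tau>. h x + h y \<le> \<tau> \<and> \<tau> \<le> \<sigma> \<longrightarrow>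
        \<beta> * phi_inv \<phi> x \<tau> \<le> phi_inv \<phi> y \<tau>)"
    unfolding cond_5_def by blast
  obtain C where good: "ae_in \<Omega> (\<lambda>x. weak_Phi_fun a (\<phi> x) \<and> 0 \<le> h x \<and> h x \<le> C)"
    using ae_weak_Phi_fun_and_bounded[OF h] by blast
  obtain c where "0 < c" and comparable: "ae2_in \<Omega> (\<lambda>x y. \<forall>\<tau>. \<sigma> \<le> \<tau> \<and> \<tau> \<le> \<sigma> \<longrightarrow>
      c * phi_inv \<phi> x \<tau> \<le> phi_inv \<phi> y \<tau>)"
    using assms phi_inv_comparable_if_cond_A0[of \<sigma> \<sigma>] \<open>0 < \<sigma>\<close> unfolding cond_5_def by auto
  have "ae2_in \<Omega> (\<lambda>x y. \<forall>\<tau>. 0 \<le> \<tau> \<and> \<tau> \<le> \<sigma> \<longrightarrow>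
      min \<beta> c * phi_inv \<phi> x \<tau> \<le> phi_inv \<phi> y (\<tau> + h x + h y))"
    using good ae2_in_conjI[OF above comparable]
    by (rule ae2_in_mono_ae_in) (use \<beta> \<open>0 < c\<close> in
      \<open>auto intro!: min_mult_phi_inv_le_shifted_if_above_shift[where \<sigma> = \<sigma>] simp: add.assoc\<close>)
  with \<beta> \<open>0 < c\<close> h show "\<exists>\<beta> h. 0 < \<beta> \<and> \<beta> \<le> 1 \<and> L1_Linf_nonneg \<Omega> h \<and>
      ae2_in \<Omega> (\<lambda>x y. \<forall>\<tau>. 0 \<le> \<tau> \<and> \<tau> \<le> \<sigma> \<longrightarrow> \<beta> * phi_inv \<phi> x \<tau> \<le> phi_inv \<phi> y (\<tau> + h x + h y))"
    by (intro exI[of _ "min \<beta> c"] exI[of _ h]) auto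
qed

end

theorem proposition3p1:
  fixes \<Omega> :: "'a::euclidean_space set" and \<phi> :: "'a \<Rightarrow> real \<Rightarrow> ennreal"
  assumes "\<Omega> \<in> sets lebesgue"
    and "weak_Phi \<Omega> \<phi>"
  shows "(cond_A2 \<Omega> \<phi> \<longleftrightarrow> cond_2 \<Omega> \<phi>) \<and> (cond_A2 \<Omega> \<phi> \<longleftrightarrow> cond_3 \<Omega> \<phi>) \<and>
         (cond_A2 \<Omega> \<phi> \<longleftrightarrow> cond_4 \<Omega> \<phi>) \<and> (cond_A2 \<Omega> \<phi> \<longleftrightarrow> cond_5 \<Omega> \<phi>)"
proof -
  obtain a where "1 \<le> a" and "ae_in \<Omega> (\<lambda>x. weak_Phi_fun a (\<phi> x))"
    using weak_Phi_imp_ae_weak_Phi_fun[OF assms(2)] by blast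
  note setting = assms(1) this
  show ?thesis
    using cond_2_if_cond_A2[OF setting] cond_A2_if_cond_2[OF setting]
      cond_3_if_cond_A2[OF setting] cond_A2_if_cond_3[OF setting]
      cond_4_if_cond_A2[OF setting] cond_5_if_cond_4[OF setting] cond_A2_if_cond_5[OF setting]
    by blast
qed

end
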